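(* Let $B$ be a locally compact Hausdorff space and let $(X,r)$ be a $B$-space. Then the anchor map $r\colon X\to B$ extends uniquely to a proper continuous map $\beta_Br\colon\beta_BX\to B$ with $\beta_Br\circ i=r$, where $i\colon X\to\beta_BX$ is the canonical map.
   Context: A $B$-space is a topological space $X$ with a continuous map $r\colon X\to B$. Let $H_X\subseteq\mathrm{C_b}(X)$ be the closed linear span of products $g\cdot(h\circ r)$ with $g\in\mathrm{C_b}(X)$, $h\in\mathrm C_0(B)$, a commutative C*-algebra. The relative Stone--Čech compactification $\beta_BX$ is the spectrum of $H_X$, and $i\colon X\to\beta_BX$ maps $x$ to the character $\varphi\mapsto\varphi(x)$. *)

theory Defs
  imports "HOL-Analysis.Analysis"
begin

text \<open>Elements of function algebras on a space are represented as complex-valued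
functions that vanish outside the carrier (so that equality of elements is
equality on the space).\<close>

definition Cb :: "'a topology \<Rightarrow> ('a \<Rightarrow> complex) set" where
  "Cb X = {f. continuous_map X euclidean f \<and>
              (\<exists>M. \<forall>x\<in>topspace X. norm (f x) \<le> M) \<and>
              (\<forall>x. x \<notin> topspace X \<longrightarrow> f x = 0)}"

definition C0 :: "'b topology \<Rightarrow> ('b \<Rightarrow> complex) set" where
  "C0 B = {h. continuous_map B euclidean h \<and>
              (\<forall>e>0. compactin B {b \<in> topspace B. e \<le> norm (h b)}) \<and>
              (\<forall>b. b \<notin> topspace B \<longrightarrow> h b = 0)}"

definition HX_gen :: "'a topology \<Rightarrow> 'b topology \<Rightarrow> ('a \<Rightarrow> 'b) \<Rightarrow> ('a \<Rightarrow> complex) set" where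
  "HX_gen X B r = {(\<lambda>x. g x * h (r x)) | g h. g \<in> Cb X \<and> h \<in> C0 B}"

inductive_set HX_span :: "'a topology \<Rightarrow> 'b topology \<Rightarrow> ('a \<Rightarrow> 'b) \<Rightarrow> ('a \<Rightarrow> complex) set"
  for X B r where
  zero: "(\<lambda>x. 0) \<in> HX_span X B r"
| add: "s \<in> HX_span X B r \<Longrightarrow> p \<in> HX_gen X B r \<Longrightarrow> (c::complex) \<noteq> 0 \<Longrightarrow>
          (\<lambda>x. s x + c * p x) \<in> HX_span X B r"

definition HX :: "'a topology \<Rightarrow> 'b topology \<Rightarrow> ('a \<Rightarrow> 'b) \<Rightarrow> ('a \<Rightarrow> complex) set" where
  "HX X B r = {f \<in> Cb X. \<forall>e>0. \<exists>s\<in>HX_span X B r. \<forall>x\<in>topspace X. norm (f x - s x) \<le> e}"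

definition characters :: "('a \<Rightarrow> complex) set \<Rightarrow> (('a \<Rightarrow> complex) \<Rightarrow> complex) set" where
  "characters A = {\<phi> \<in> extensional A.
      (\<forall>f\<in>A. \<forall>g\<in>A. \<phi> (\<lambda>x. f x + g x) = \<phi> f + \<phi> g) \<and>
      (\<forall>f\<in>A. \<forall>c. \<phi> (\<lambda>x. c * f x) = c * \<phi> f) \<and>
      (\<forall>f\<in>A. \<forall>g\<in>A. \<phi> (\<lambda>x. f x * g x) = \<phi> f * \<phi> g) \<and>
      (\<exists>f\<in>A. \<phi> f \<noteq> 0)}"

text \<open>Spectrum with the weak-* topology (topology of pointwise convergence on A).\<close>
definition spectrum_top :: "('a \<Rightarrow> complex) set \<Rightarrow> (('a \<Rightarrow> complex) \<Rightarrow> complex) topology" where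
  "spectrum_top A = subtopology (product_topology (\<lambda>_. euclidean) A) (characters A)"

definition betaB :: "'a topology \<Rightarrow> 'b topology \<Rightarrow> ('a \<Rightarrow> 'b) \<Rightarrow> (('a \<Rightarrow> complex) \<Rightarrow> complex) topology" where
  "betaB X B r = spectrum_top (HX X B r)"

definition betaB_i :: "'a topology \<Rightarrow> 'b topology \<Rightarrow> ('a \<Rightarrow> 'b) \<Rightarrow> 'a \<Rightarrow> (('a \<Rightarrow> complex) \<Rightarrow> complex)" where
  "betaB_i X B r x = (\<lambda>f\<in>HX X B r. f x)"

end

theory Submission
  imports Defs
begin

text \<open>\<open>H\<^sub>X\<close> is an ideal of \<open>C\<^sub>b(X)\<close> closed under conjugation, and for a
  character \<open>\<phi>\<close> of such an ideal \<open>\<phi> f \<noteq> 0\<close> forces \<open>\<phi> f\<close> into the closure of \<open>f(X)\<close>: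
  otherwise \<open>\<phi> f - f\<close> would be invertible in \<open>C\<^sub>b(X)\<close> and the ideal property would give
  \<open>\<phi> f = 0\<close>.  A sum-of-squares trick upgrades this to simultaneous approximation of finitely
  many values, so the point evaluations \<open>i(X)\<close> are dense in \<open>\<beta>\<^sub>BX\<close>; uniqueness of the
  extension follows because \<open>B\<close> is Hausdorff.

  For existence, \<open>\<phi>\<close> restricted to the pullbacks \<open>h \<circ> r\<close>, \<open>h \<in> C\<^sub>0(B)\<close>, is a nonzero
  character of \<open>C\<^sub>0(B)\<close>, hence evaluation at a point \<open>\<beta>\<^sub>Br(\<phi>)\<close> of \<open>B\<close>.  Continuity of
  \<open>\<beta>\<^sub>Br\<close> is immediate from the weak-* topology, and properness from the compactness of
  the sets \<open>{\<phi>. |\<phi>(h \<circ> r)| \<ge> 1/2}\<close>, closed subsets of a product of compact discs.\<close>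

section \<open>Bounded continuous functions and functions vanishing at infinity\<close>

lemma continuous_map_times:
  fixes f g :: "'a \<Rightarrow> 'b::real_normed_algebra"
  shows "continuous_map X euclidean f \<Longrightarrow> continuous_map X euclidean g \<Longrightarrow>
    continuous_map X euclidean (\<lambda>x. f x * g x)"
  by (simp add: continuous_map_atin tendsto_mult)

lemma continuous_map_cnj:
  "continuous_map X euclidean f \<Longrightarrow> continuous_map X euclidean (\<lambda>x. cnj (f x))"
  by (simp add: continuous_map_atin tendsto_cnj)

lemma continuous_map_inverse:
  fixes f :: "'a \<Rightarrow> 'b::real_normed_div_algebra"
  assumes "continuous_map X euclidean f" "\<And>x. x \<in> topspace X \<Longrightarrow> f x \<noteq> 0"
  shows "continuous_map X euclidean (\<lambda>x. inverse (f x))"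
  using assms by (simp add: continuous_map_atin tendsto_inverse)

lemma CbI:
  assumes "continuous_map X euclidean f" "\<And>x. x \<in> topspace X \<Longrightarrow> norm (f x) \<le> M"
    "\<And>x. x \<notin> topspace X \<Longrightarrow> f x = 0"
  shows "f \<in> Cb X"
  using assms unfolding Cb_def by blast

lemma CbD:
  assumes "f \<in> Cb X"
  shows "continuous_map X euclidean f" "\<And>x. x \<notin> topspace X \<Longrightarrow> f x = 0"
  using assms unfolding Cb_def by blast+

lemma Cb_bound:
  assumes "f \<in> Cb X"
  obtains M where "M \<ge> 0" "\<And>x. norm (f x) \<le> M"
proof -
  obtain M where M: "\<forall>x\<in>topspace X. norm (f x) \<le> M" using assms unfolding Cb_def by blast
  have "norm (f x) \<le> max M 0" for x
    using M CbD(2)[OF assms, of x] by (cases "x \<in> topspace X") auto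
  then show ?thesis using that[of "max M 0"] by simp
qed

lemma Cb_zero: "(\<lambda>x. 0) \<in> Cb X"
  by (rule CbI[where M=0]) auto

lemma Cb_const_on: "(\<lambda>x. if x \<in> topspace X then c else 0) \<in> Cb X"
proof (rule CbI[where M="norm c"])
  show "continuous_map X euclidean (\<lambda>x. if x \<in> topspace X then c else 0)"
    by (rule continuous_map_eq[of _ _ "\<lambda>x. c"]) auto
qed auto

lemma Cb_add:
  assumes f: "f \<in> Cb X" and g: "g \<in> Cb X"
  shows "(\<lambda>x. f x + g x) \<in> Cb X"
proof -
  obtain M N where "\<And>x. norm (f x) \<le> M" "\<And>x. norm (g x) \<le> N"
    using Cb_bound[OF f] Cb_bound[OF g] by metis
  then have "norm (f x + g x) \<le> M + N" for x
    by (meson add_mono norm_triangle_le)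
  then show ?thesis
    by (intro CbI continuous_map_add CbD[OF f] CbD[OF g]) (auto simp: CbD(2)[OF f] CbD(2)[OF g])
qed

lemma Cb_mult:
  assumes f: "f \<in> Cb X" and g: "g \<in> Cb X"
  shows "(\<lambda>x. f x * g x) \<in> Cb X"
proof -
  obtain M N where "M \<ge> 0" "\<And>x. norm (f x) \<le> M" "\<And>x. norm (g x) \<le> N"
    using Cb_bound[OF f] Cb_bound[OF g] by metis
  then have "norm (f x * g x) \<le> M * N" for x
    by (simp add: norm_mult mult_mono')
  then show ?thesis
    by (intro CbI continuous_map_times CbD[OF f] CbD[OF g]) (auto simp: CbD(2)[OF f])
qed

lemma Cb_scale:
  assumes f: "f \<in> Cb X"
  shows "(\<lambda>x. c * f x) \<in> Cb X"
proof -
  have "(\<lambda>x. (if x \<in> topspace X then c else 0) * f x) = (\<lambda>x. c * f x)"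
    using CbD(2)[OF f] by auto
  then show ?thesis using Cb_mult[OF Cb_const_on f] by metis
qed

lemma Cb_cnj:
  assumes f: "f \<in> Cb X"
  shows "(\<lambda>x. cnj (f x)) \<in> Cb X"
proof -
  obtain M where "\<And>x. norm (f x) \<le> M" using Cb_bound[OF f] by metis
  then show ?thesis by (intro CbI continuous_map_cnj CbD[OF f]) (auto simp: CbD(2)[OF f])
qed

lemma C0I:
  assumes h: "continuous_map B euclidean h" and "\<And>b. b \<notin> topspace B \<Longrightarrow> h b = 0"
    and "\<And>e. e > 0 \<Longrightarrow> \<exists>K. compactin B K \<and> {b \<in> topspace B. e \<le> norm (h b)} \<subseteq> K"
  shows "h \<in> C0 B"
proof -
  have "compactin B {b \<in> topspace B. e \<le> norm (h b)}" if "e > 0" for e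
  proof -
    obtain K where K: "compactin B K" "{b \<in> topspace B. e \<le> norm (h b)} \<subseteq> K"
      using assms(3)[OF \<open>e > 0\<close>] by blast
    have "closedin B {b \<in> topspace B. h b \<in> {z. e \<le> norm z}}"
      by (rule closedin_continuous_map_preimage[OF h])
         (simp add: closed_Collect_le continuous_on_norm_id)
    then show ?thesis using closed_compactin[OF K] by simp
  qed
  then show ?thesis using assms unfolding C0_def by blast
qed

lemma C0D:
  assumes "h \<in> C0 B"
  shows "continuous_map B euclidean h" "\<And>b. b \<notin> topspace B \<Longrightarrow> h b = 0"
    "\<And>e. e > 0 \<Longrightarrow> compactin B {b \<in> topspace B. e \<le> norm (h b)}"
  using assms unfolding C0_def by blast+

lemma C0_bound:
  assumes h: "h \<in> C0 B"
  obtains M where "\<And>b. norm (h b) \<le> M"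
proof -
  have "compact (h ` {b \<in> topspace B. 1 \<le> norm (h b)})"
    using image_compactin[OF C0D(3)[OF h] C0D(1)[OF h]] by simp
  then obtain M where "\<forall>z \<in> h ` {b \<in> topspace B. 1 \<le> norm (h b)}. norm z \<le> M"
    using compact_imp_bounded bounded_iff by metis
  then have M: "\<And>b. b \<in> topspace B \<Longrightarrow> 1 \<le> norm (h b) \<Longrightarrow> norm (h b) \<le> M"
    by blast
  have "norm (h b) \<le> max M 1" for b
    using M[of b] C0D(2)[OF h, of b] by (cases "b \<in> topspace B \<and> 1 \<le> norm (h b)") auto
  then show ?thesis using that by blast
qed

lemma C0_mult_bounded:
  assumes h: "h \<in> C0 B" and k: "continuous_map B euclidean k"
    and M: "\<And>b. b \<in> topspace B \<Longrightarrow> norm (k b) \<le> M"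
  shows "(\<lambda>b. h b * k b) \<in> C0 B"
proof (rule C0I)
  show "continuous_map B euclidean (\<lambda>b. h b * k b)"
    by (rule continuous_map_times[OF C0D(1)[OF h] k])
next
  fix e :: real assume "e > 0"
  define M' where "M' = max M 0 + 1"
  have "M' > 0" by (simp add: M'_def)
  have "{b \<in> topspace B. e \<le> norm (h b * k b)} \<subseteq> {b \<in> topspace B. e / M' \<le> norm (h b)}"
  proof clarify
    fix b assume b: "b \<in> topspace B" "e \<le> norm (h b * k b)"
    have "norm (h b * k b) \<le> norm (h b) * M'"
      unfolding norm_mult using M[OF b(1)] by (intro mult_left_mono) (auto simp: M'_def)
    then show "e / M' \<le> norm (h b)"
      using b(2) \<open>M' > 0\<close> by (simp add: divide_le_eq)
  qed
  then show "\<exists>K. compactin B K \<and> {b \<in> topspace B. e \<le> norm (h b * k b)} \<subseteq> K"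
    using C0D(3)[OF h] \<open>e > 0\<close> \<open>M' > 0\<close> by (meson divide_pos_pos)
qed (simp add: C0D(2)[OF h])

lemma C0_scale: "h \<in> C0 B \<Longrightarrow> (\<lambda>b. c * h b) \<in> C0 B"
  using C0_mult_bounded[of h B "\<lambda>_. c" "norm c"] by (simp add: mult.commute)

lemma C0_cnj:
  assumes h: "h \<in> C0 B"
  shows "(\<lambda>b. cnj (h b)) \<in> C0 B"
  using C0D[OF h] by (intro C0I continuous_map_cnj) auto

lemma C0_Urysohn:
  assumes "locally_compact_space B" "Hausdorff_space B"
    and K: "compactin B K" and W: "openin B W" "K \<subseteq> W"
  obtains h where "h \<in> C0 B" "\<And>b. b \<in> K \<Longrightarrow> h b = 1" "\<And>b. b \<notin> W \<Longrightarrow> h b = 0"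
proof -
  obtain U L where UL: "openin B U" "compactin B L" "K \<subseteq> U" "U \<subseteq> L"
    using assms locally_compact_space_compact_closed_compact K by metis
  define V where "V = U \<inter> W"
  have "completely_regular_space B"
    using assms locally_compact_regular_imp_completely_regular_space by blast
  moreover have "closedin B (topspace B - V)" "disjnt K (topspace B - V)"
    using UL W by (auto simp: V_def disjnt_def)
  ultimately obtain f where f: "continuous_map B euclideanreal f"
    "f ` (topspace B - V) \<subseteq> {0}" "f ` K \<subseteq> {1}"
    using Urysohn_completely_regular_compact_closed_alt K by metis
  define h where "h b = (if b \<in> topspace B then complex_of_real (f b) else 0)" for b
  have "continuous_map B euclidean h"
    by (rule continuous_map_eq[of _ _ "\<lambda>b. complex_of_real (f b)"])
       (use f(1) in \<open>auto simp: h_def continuous_map_atin tendsto_of_real\<close>)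
  then have "h \<in> C0 B"
  proof (rule C0I)
    fix e :: real assume "e > 0"
    have "{b \<in> topspace B. e \<le> norm (h b)} \<subseteq> L"
      using f(2) UL \<open>e > 0\<close> by (force simp: h_def V_def)
    then show "\<exists>K. compactin B K \<and> {b \<in> topspace B. e \<le> norm (h b)} \<subseteq> K"
      using UL by blast
  qed (simp add: h_def)
  moreover have "h b = 1" if "b \<in> K" for b
    using that f(3) compactin_subset_topspace[OF K] by (auto simp: h_def)
  moreover have "h b = 0" if "b \<notin> W" for b
    using that f(2) by (auto simp: h_def V_def)
  ultimately show ?thesis using that by blast
qed

lemma C0_separates_points:
  assumes "locally_compact_space B" "Hausdorff_space B"
    and b: "b \<in> topspace B" "b' \<in> topspace B" and eq: "\<And>h. h \<in> C0 B \<Longrightarrow> h b = h b'"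
  shows "b = b'"
proof (rule ccontr)
  assume "b \<noteq> b'"
  moreover have "openin B (topspace B - {b'})"
    using closedin_Hausdorff_singleton[OF assms(2) b(2)] by blast
  ultimately obtain h where "h \<in> C0 B" "h b = 1" "h b' = 0"
    using C0_Urysohn[OF assms(1,2), of "{b}" "topspace B - {b'}"] b by auto
  then show False using eq[of h] by simp
qed

lemma compactin_finite_cover_norm_gt:
  fixes G :: "'b \<Rightarrow> 'b \<Rightarrow> 'c::real_normed_vector"
  assumes K: "compactin B K" and G: "\<And>b. b \<in> K \<Longrightarrow> continuous_map B euclidean (G b)"
    and c: "\<And>b. b \<in> K \<Longrightarrow> c < norm (G b b)"
  shows "\<exists>F. finite F \<and> F \<subseteq> K \<and> (\<forall>b'\<in>K. \<exists>b\<in>F. c < norm (G b b'))"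
proof -
  define U where "U b = {b' \<in> topspace B. G b b' \<in> {z. c < norm z}}" for b
  have "open {z::'c. c < norm z}"
    by (intro open_Collect_less continuous_on_const continuous_on_norm_id)
  then have "openin B (U b)" if "b \<in> K" for b
    unfolding U_def by (intro openin_continuous_map_preimage[OF G[OF that]]) simp
  then have "\<forall>V\<in>U ` K. openin B V" by blast
  moreover have "K \<subseteq> \<Union> (U ` K)"
    using c compactin_subset_topspace[OF K] by (auto simp: U_def)
  ultimately obtain \<F> where "finite \<F>" "\<F> \<subseteq> U ` K" "K \<subseteq> \<Union>\<F>"
    using K unfolding compactin_def by blast
  then obtain F where F: "finite F" "F \<subseteq> K" "K \<subseteq> \<Union> (U ` F)"
    using finite_subset_image by metis
  have "\<forall>b'\<in>K. \<exists>b\<in>F. c < norm (G b b')"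
    using F(3) by (auto simp: U_def)
  then show ?thesis using F(1,2) by blast
qed

section \<open>The algebra \<open>H\<^sub>X\<close>\<close>

lemma HX_genI: "g \<in> Cb X \<Longrightarrow> h \<in> C0 B \<Longrightarrow> (\<lambda>x. g x * h (r x)) \<in> HX_gen X B r"
  unfolding HX_gen_def by blast

lemma HX_genE:
  assumes "p \<in> HX_gen X B r"
  obtains g h where "p = (\<lambda>x. g x * h (r x))" "g \<in> Cb X" "h \<in> C0 B"
  using assms unfolding HX_gen_def by blast

lemma HX_gen_subset_Cb:
  assumes r: "continuous_map X B r"
  shows "HX_gen X B r \<subseteq> Cb X"
proof
  fix p assume "p \<in> HX_gen X B r"
  then obtain g h where p: "p = (\<lambda>x. g x * h (r x))" and g: "g \<in> Cb X" and h: "h \<in> C0 B"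
    by (rule HX_genE)
  obtain M N where "M \<ge> 0" "\<And>x. norm (g x) \<le> M" "\<And>b. norm (h b) \<le> N"
    using Cb_bound[OF g] C0_bound[OF h] by metis
  then have "norm (g x * h (r x)) \<le> M * N" for x
    by (simp add: norm_mult mult_mono')
  moreover have "continuous_map X euclidean (\<lambda>x. h (r x))"
    using continuous_map_compose[OF r C0D(1)[OF h]] by (simp add: o_def)
  ultimately show "p \<in> Cb X"
    unfolding p by (intro CbI continuous_map_times CbD[OF g]) (auto simp: CbD(2)[OF g])
qed

lemma HX_span_subset_Cb:
  assumes "continuous_map X B r"
  shows "HX_span X B r \<subseteq> Cb X"
proof
  fix s assume "s \<in> HX_span X B r"
  then show "s \<in> Cb X"
  proof induction
    case (add s p c)
    then show ?case
      using Cb_add[OF add.IH Cb_scale[OF subsetD[OF HX_gen_subset_Cb[OF assms] add.hyps(2)]]] by simp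
  qed (rule Cb_zero)
qed

lemma HX_gen_subset_span: "HX_gen X B r \<subseteq> HX_span X B r"
proof
  fix p assume "p \<in> HX_gen X B r"
  then show "p \<in> HX_span X B r" using HX_span.add[OF HX_span.zero, where p=p and c=1] by simp
qed

lemma HX_span_add:
  "t \<in> HX_span X B r \<Longrightarrow> s \<in> HX_span X B r \<Longrightarrow> (\<lambda>x. s x + t x) \<in> HX_span X B r"
proof (induction rule: HX_span.induct)
  case (add t p c)
  then have "(\<lambda>x. (s x + t x) + c * p x) \<in> HX_span X B r"
    by (intro HX_span.add)
  then show ?case by (simp add: add.assoc)
qed simp

lemma HX_span_Cb_mult:
  "s \<in> HX_span X B r \<Longrightarrow> g \<in> Cb X \<Longrightarrow> (\<lambda>x. g x * s x) \<in> HX_span X B r"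
proof (induction rule: HX_span.induct)
  case (add s p c)
  obtain g' h where p: "p = (\<lambda>x. g' x * h (r x))" and g': "g' \<in> Cb X" and h: "h \<in> C0 B"
    using add.hyps(2) by (rule HX_genE)
  have "(\<lambda>x. (g x * g' x) * h (r x)) \<in> HX_gen X B r"
    using HX_genI[OF Cb_mult[OF add.prems g'] h] .
  then have "(\<lambda>x. g x * s x + c * ((g x * g' x) * h (r x))) \<in> HX_span X B r"
    by (rule HX_span.add[OF add.IH[OF add.prems] _ add.hyps(3)])
  then show ?case by (simp add: p algebra_simps)
qed (simp add: HX_span.zero)

lemma HX_span_cnj: "s \<in> HX_span X B r \<Longrightarrow> (\<lambda>x. cnj (s x)) \<in> HX_span X B r"
proof (induction rule: HX_span.induct)
  case (add s p c)
  obtain g h where p: "p = (\<lambda>x. g x * h (r x))" and g: "g \<in> Cb X" and h: "h \<in> C0 B"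
    using add.hyps(2) by (rule HX_genE)
  have "(\<lambda>x. cnj (g x) * cnj (h (r x))) \<in> HX_gen X B r"
    using HX_genI[OF Cb_cnj[OF g] C0_cnj[OF h]] .
  then have "(\<lambda>x. cnj (s x) + cnj c * (cnj (g x) * cnj (h (r x)))) \<in> HX_span X B r"
    by (rule HX_span.add[OF add.IH]) (use add.hyps(3) in simp)
  then show ?case by (simp add: p)
qed (simp add: HX_span.zero)

lemma HX_approx:
  "f \<in> HX X B r \<Longrightarrow> e > 0 \<Longrightarrow> \<exists>s\<in>HX_span X B r. \<forall>x\<in>topspace X. norm (f x - s x) \<le> e"
  unfolding HX_def by blast

lemma HX_subset_Cb: "HX X B r \<subseteq> Cb X"
  unfolding HX_def by blast

lemma HX_span_subset_HX:
  assumes "continuous_map X B r"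
  shows "HX_span X B r \<subseteq> HX X B r"
  using HX_span_subset_Cb[OF assms] unfolding HX_def by force

lemma HX_gen_subset_HX:
  "continuous_map X B r \<Longrightarrow> HX_gen X B r \<subseteq> HX X B r"
  using HX_gen_subset_span HX_span_subset_HX by blast

lemma HX_add:
  assumes f: "f \<in> HX X B r" and g: "g \<in> HX X B r"
  shows "(\<lambda>x. f x + g x) \<in> HX X B r"
  unfolding HX_def
proof (intro CollectI conjI allI impI)
  show "(\<lambda>x. f x + g x) \<in> Cb X" using Cb_add f g HX_subset_Cb by blast
  fix e :: real assume "e > 0"
  then obtain s t where s: "s \<in> HX_span X B r" "\<forall>x\<in>topspace X. norm (f x - s x) \<le> e/2"
    and t: "t \<in> HX_span X B r" "\<forall>x\<in>topspace X. norm (g x - t x) \<le> e/2"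
    using HX_approx[OF f, of "e/2"] HX_approx[OF g, of "e/2"] by auto
  have "norm (f x + g x - (s x + t x)) \<le> e" if "x \<in> topspace X" for x
  proof -
    have "norm (f x - s x) \<le> e/2" "norm (g x - t x) \<le> e/2" using s(2) t(2) that by auto
    then show ?thesis using norm_diff_triangle_ineq[of "f x" "g x" "s x" "t x"] by linarith
  qed
  then show "\<exists>u\<in>HX_span X B r. \<forall>x\<in>topspace X. norm (f x + g x - u x) \<le> e"
    by (intro bexI[OF _ HX_span_add[OF t(1) s(1)]]) simp
qed

lemma HX_Cb_mult:
  assumes g: "g \<in> Cb X" and f: "f \<in> HX X B r"
  shows "(\<lambda>x. g x * f x) \<in> HX X B r"
  unfolding HX_def
proof (intro CollectI conjI allI impI)
  show "(\<lambda>x. g x * f x) \<in> Cb X" using Cb_mult g f HX_subset_Cb by blast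
  obtain M where M: "M \<ge> 0" "\<And>x. norm (g x) \<le> M" using Cb_bound[OF g] by blast
  fix e :: real assume "e > 0"
  then obtain s where s: "s \<in> HX_span X B r" "\<forall>x\<in>topspace X. norm (f x - s x) \<le> e/(M+1)"
    using HX_approx[OF f, of "e/(M+1)"] M(1) by auto
  have "norm (g x * f x - g x * s x) \<le> e" if "x \<in> topspace X" for x
  proof -
    have "norm (g x * f x - g x * s x) = norm (g x) * norm (f x - s x)"
      by (metis norm_mult right_diff_distrib)
    also have "\<dots> \<le> (M+1) * (e/(M+1))"
      using M(1) M(2)[of x] s(2) that by (intro mult_mono) auto
    finally show ?thesis using M(1) by simp
  qed
  then show "\<exists>u\<in>HX_span X B r. \<forall>x\<in>topspace X. norm (g x * f x - u x) \<le> e"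
    by (intro bexI[OF _ HX_span_Cb_mult[OF s(1) g]]) simp
qed

lemma HX_cnj:
  assumes f: "f \<in> HX X B r"
  shows "(\<lambda>x. cnj (f x)) \<in> HX X B r"
  unfolding HX_def
proof (intro CollectI conjI allI impI)
  show "(\<lambda>x. cnj (f x)) \<in> Cb X" using Cb_cnj f HX_subset_Cb by blast
  fix e :: real assume "e > 0"
  then obtain s where s: "s \<in> HX_span X B r" "\<forall>x\<in>topspace X. norm (f x - s x) \<le> e"
    using HX_approx[OF f, of e] by auto
  have "norm (cnj (f x) - cnj (s x)) \<le> e" if "x \<in> topspace X" for x
    using s(2) that by (simp only: complex_cnj_diff[symmetric] complex_mod_cnj)
  then show "\<exists>u\<in>HX_span X B r. \<forall>x\<in>topspace X. norm (cnj (f x) - u x) \<le> e"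
    by (intro bexI[OF _ HX_span_cnj[OF s(1)]]) simp
qed

section \<open>Characters of conjugation-closed ideals of \<open>C\<^sub>b(X)\<close>\<close>

lemma
  assumes "\<phi> \<in> characters A"
  shows character_extensional: "\<phi> \<in> extensional A"
    and character_add: "f \<in> A \<Longrightarrow> g \<in> A \<Longrightarrow> \<phi> (\<lambda>x. f x + g x) = \<phi> f + \<phi> g"
    and character_scale: "f \<in> A \<Longrightarrow> \<phi> (\<lambda>x. c * f x) = c * \<phi> f"
    and character_mult: "f \<in> A \<Longrightarrow> g \<in> A \<Longrightarrow> \<phi> (\<lambda>x. f x * g x) = \<phi> f * \<phi> g"
    and character_nonzero: "\<exists>f\<in>A. \<phi> f \<noteq> 0"
  using assms unfolding characters_def by blast+

lemma character_zero:
  assumes "\<phi> \<in> characters A"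
  shows "\<phi> (\<lambda>x. 0) = 0"
proof -
  obtain f where "f \<in> A" using character_nonzero[OF assms] by blast
  then show ?thesis using character_scale[OF assms, of f 0] by simp
qed

lemma topspace_spectrum_top: "topspace (spectrum_top A) = characters A"
  using character_extensional
  by (fastforce simp: spectrum_top_def topspace_product_topology PiE_def)

lemma continuous_map_product_euclidean_eval:
  "f \<in> A \<Longrightarrow> continuous_map (product_topology (\<lambda>_. euclidean) A) euclidean (\<lambda>\<psi>. \<psi> f)"
  using continuous_map_product_projection[of f A "\<lambda>_. euclidean"] by simp

lemma continuous_map_spectrum_eval:
  "f \<in> A \<Longrightarrow> continuous_map (spectrum_top A) euclidean (\<lambda>\<phi>. \<phi> f)"
  unfolding spectrum_top_def
  by (intro continuous_map_from_subtopology continuous_map_product_euclidean_eval)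

lemma product_topology_neighbourhood_ball:
  fixes \<phi> :: "'i \<Rightarrow> 'b::metric_space"
  assumes T: "openin (product_topology (\<lambda>_. euclidean) I) T" and "\<phi> \<in> T"
  obtains J \<epsilon> where "finite J" "J \<subseteq> I" "\<epsilon> > 0"
    "\<And>\<psi>. \<psi> \<in> extensional I \<Longrightarrow> (\<forall>i\<in>J. dist (\<psi> i) (\<phi> i) < \<epsilon>) \<Longrightarrow> \<psi> \<in> T"
proof -
  obtain U where U: "finite {i \<in> I. U i \<noteq> UNIV}" "\<And>i. i \<in> I \<Longrightarrow> open (U i)"
    "\<phi> \<in> PiE I U" "PiE I U \<subseteq> T"
    using T \<open>\<phi> \<in> T\<close> unfolding openin_product_topology_alt by force
  define J where "J = {i \<in> I. U i \<noteq> UNIV}"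
  have "\<exists>e>0. ball (\<phi> i) e \<subseteq> U i" if "i \<in> I" for i
    using U(2,3) that open_contains_ball by (fastforce simp: PiE_iff)
  then obtain e where e: "\<And>i. i \<in> I \<Longrightarrow> e i > 0 \<and> ball (\<phi> i) (e i) \<subseteq> U i" by metis
  define \<epsilon> where "\<epsilon> = Min (insert 1 (e ` J))"
  have "finite J" using U(1) by (simp add: J_def)
  then have "\<epsilon> > 0" "\<And>i. i \<in> J \<Longrightarrow> \<epsilon> \<le> e i"
    using e by (auto simp: \<epsilon>_def J_def)
  moreover have "\<psi> \<in> T" if "\<psi> \<in> extensional I" "\<forall>i\<in>J. dist (\<psi> i) (\<phi> i) < \<epsilon>" for \<psi>
  proof -
    have "\<psi> i \<in> U i" if "i \<in> I" for i
    proof (cases "i \<in> J")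
      case True
      then have "dist (\<phi> i) (\<psi> i) < e i"
        using \<open>\<forall>i\<in>J. dist (\<psi> i) (\<phi> i) < \<epsilon>\<close> \<open>\<And>i. i \<in> J \<Longrightarrow> \<epsilon> \<le> e i\<close> by (fastforce simp: dist_commute)
      then show ?thesis using e[OF that] by (auto simp: subset_iff)
    qed (use that in \<open>auto simp: J_def\<close>)
    then have "\<psi> \<in> PiE I U" using \<open>\<psi> \<in> extensional I\<close> by (simp add: PiE_iff)
    then show ?thesis using U(4) by blast
  qed
  ultimately show ?thesis using that \<open>finite J\<close> by (auto simp: J_def)
qed

lemma closedin_Collect_all_eq:
  assumes "Hausdorff_space Y"
    and "\<And>i. i \<in> I \<Longrightarrow> continuous_map X Y (f i)" "\<And>i. i \<in> I \<Longrightarrow> continuous_map X Y (g i)"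
  shows "closedin X {x \<in> topspace X. \<forall>i\<in>I. f i x = g i x}"
proof (cases "I = {}")
  case False
  then have "{x \<in> topspace X. \<forall>i\<in>I. f i x = g i x} = (\<Inter>i\<in>I. {x \<in> topspace X. f i x = g i x})"
    by auto
  then show ?thesis using assms False by (auto intro!: closedin_Inter closedin_continuous_maps_eq)
qed simp

definition multiplicative_functionals :: "('a \<Rightarrow> complex) set \<Rightarrow> (('a \<Rightarrow> complex) \<Rightarrow> complex) set"
  where "multiplicative_functionals A = {\<psi> \<in> extensional A.
      (\<forall>f\<in>A. \<forall>g\<in>A. \<psi> (\<lambda>x. f x + g x) = \<psi> f + \<psi> g) \<and>
      (\<forall>f\<in>A. \<forall>c. \<psi> (\<lambda>x. c * f x) = c * \<psi> f) \<and>
      (\<forall>f\<in>A. \<forall>g\<in>A. \<psi> (\<lambda>x. f x * g x) = \<psi> f * \<psi> g)}"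

lemma characters_eq_multiplicative_functionals:
  "characters A = {\<psi> \<in> multiplicative_functionals A. \<exists>f\<in>A. \<psi> f \<noteq> 0}"
  unfolding characters_def multiplicative_functionals_def by blast

locale Cb_ideal =
  fixes X :: "'a topology" and A :: "('a \<Rightarrow> complex) set"
  assumes subset_Cb: "A \<subseteq> Cb X"
    and zero_mem: "(\<lambda>x. 0) \<in> A"
    and add_mem: "f \<in> A \<Longrightarrow> g \<in> A \<Longrightarrow> (\<lambda>x. f x + g x) \<in> A"
    and Cb_mult_mem: "g \<in> Cb X \<Longrightarrow> f \<in> A \<Longrightarrow> (\<lambda>x. g x * f x) \<in> A"
    and cnj_mem: "f \<in> A \<Longrightarrow> (\<lambda>x. cnj (f x)) \<in> A"
begin

lemma mult_mem: "f \<in> A \<Longrightarrow> g \<in> A \<Longrightarrow> (\<lambda>x. f x * g x) \<in> A"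
  using Cb_mult_mem subset_Cb by blast

lemma scale_mem:
  assumes "f \<in> A"
  shows "(\<lambda>x. c * f x) \<in> A"
proof -
  have "(\<lambda>x. (if x \<in> topspace X then c else 0) * f x) = (\<lambda>x. c * f x)"
    using CbD(2) assms subset_Cb by fastforce
  then show ?thesis using Cb_mult_mem[OF Cb_const_on assms] by metis
qed

lemma diff_mem: "f \<in> A \<Longrightarrow> g \<in> A \<Longrightarrow> (\<lambda>x. f x - g x) \<in> A"
  using add_mem[of f "\<lambda>x. (-1) * g x"] scale_mem[of g "-1"] by simp

lemma sum_mem: "finite I \<Longrightarrow> (\<And>i. i \<in> I \<Longrightarrow> f i \<in> A) \<Longrightarrow> (\<lambda>x. \<Sum>i\<in>I. f i x) \<in> A"
  by (induction I rule: finite_induct) (auto intro: zero_mem add_mem)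

context
  fixes \<phi> assumes \<phi>: "\<phi> \<in> characters A"
begin

lemma character_diff: "f \<in> A \<Longrightarrow> g \<in> A \<Longrightarrow> \<phi> (\<lambda>x. f x - g x) = \<phi> f - \<phi> g"
  using character_add[OF \<phi>, of f "\<lambda>x. (-1) * g x"] character_scale[OF \<phi>, of g "-1"]
    scale_mem[of g "-1"] by simp

lemma character_sum:
  "finite I \<Longrightarrow> (\<And>i. i \<in> I \<Longrightarrow> f i \<in> A) \<Longrightarrow> \<phi> (\<lambda>x. \<Sum>i\<in>I. f i x) = (\<Sum>i\<in>I. \<phi> (f i))"
proof (induction I rule: finite_induct)
  case (insert i I)
  then show ?case using character_add[OF \<phi>, of "f i" "\<lambda>x. \<Sum>i\<in>I. f i x"] sum_mem[of I f] by simp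
qed (simp add: character_zero[OF \<phi>])

text \<open>Otherwise \<open>k = f / (\<phi> f - f)\<close> lies in \<open>A\<close> and \<open>f = \<phi> f \<cdot> k - f \<cdot> k\<close>, whence
  \<open>\<phi> f = (\<phi> f - \<phi> f) \<phi> k = 0\<close>.\<close>
lemma character_in_closure_range:
  assumes f: "f \<in> A" and nz: "\<phi> f \<noteq> 0"
  shows "\<phi> f \<in> closure (f ` topspace X)"
proof (rule ccontr)
  define l where "l = \<phi> f"
  assume "\<phi> f \<notin> closure (f ` topspace X)"
  then obtain d where d: "d > 0" "\<And>x. x \<in> topspace X \<Longrightarrow> d \<le> norm (l - f x)"
    unfolding closure_approachable l_def by (auto simp: dist_norm norm_minus_commute not_less)
  have fCb: "f \<in> Cb X" using f subset_Cb by blast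
  define g where "g x = (if x \<in> topspace X then inverse (l - f x) else 0)" for x
  have "g \<in> Cb X"
  proof (rule CbI[where M="inverse d"])
    have "continuous_map X euclidean (\<lambda>x. inverse (l - f x))"
      using d by (intro continuous_map_inverse continuous_map_diff CbD(1)[OF fCb]) force+
    then show "continuous_map X euclidean g"
      by (rule continuous_map_eq) (simp add: g_def)
  qed (use d in \<open>auto simp: g_def norm_inverse le_imp_inverse_le\<close>)
  define k where "k x = g x * f x" for x
  have k: "k \<in> A" unfolding k_def by (rule Cb_mult_mem[OF \<open>g \<in> Cb X\<close> f])
  have f_eq: "f = (\<lambda>x. l * k x - f x * k x)"
  proof
    fix x show "f x = l * k x - f x * k x"
    proof (cases "x \<in> topspace X")
      case True
      then have "l - f x \<noteq> 0" using d by force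
      have "l * k x - f x * k x = (l - f x) * inverse (l - f x) * f x"
        by (simp add: k_def g_def True algebra_simps)
      then show ?thesis using \<open>l - f x \<noteq> 0\<close> by simp
    qed (simp add: k_def g_def CbD(2)[OF fCb])
  qed
  have "\<phi> f = \<phi> (\<lambda>x. l * k x - f x * k x)" by (subst f_eq) simp
  also have "\<dots> = l * \<phi> k - \<phi> f * \<phi> k"
    using k f by (simp add: character_diff scale_mem mult_mem character_mult[OF \<phi>] character_scale[OF \<phi>])
  finally show False using nz by (simp add: l_def)
qed

lemma character_norm_le:
  assumes f: "f \<in> A" and "0 \<le> M" and M: "\<And>x. x \<in> topspace X \<Longrightarrow> norm (f x) \<le> M"
  shows "norm (\<phi> f) \<le> M"
proof (cases "\<phi> f = 0")
  case False
  have "closure (f ` topspace X) \<subseteq> cball 0 M"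
    using M by (intro closure_minimal) auto
  then show ?thesis using character_in_closure_range[OF f False] by auto
qed (use \<open>0 \<le> M\<close> in simp)

lemma character_real:
  assumes f: "f \<in> A" and real: "\<And>x. x \<in> topspace X \<Longrightarrow> Im (f x) = 0"
  shows "Im (\<phi> f) = 0"
proof (cases "\<phi> f = 0")
  case False
  have "closure (f ` topspace X) \<subseteq> \<real>"
    using real closed_complex_Reals by (intro closure_minimal) (auto simp: complex_is_Real_iff)
  then show ?thesis using character_in_closure_range[OF f False] by (auto simp: complex_is_Real_iff)
qed simp

lemma character_cnj:
  assumes f: "f \<in> A"
  shows "\<phi> (\<lambda>x. cnj (f x)) = cnj (\<phi> f)"
proof -
  define R where "R x = (1/2) * (f x + cnj (f x))" for x
  define I where "I x = (- \<i>/2) * (f x - cnj (f x))" for x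
  have "R \<in> A" unfolding R_def using f by (intro scale_mem add_mem cnj_mem)
  then have R: "R \<in> A" "Im (\<phi> R) = 0" by (auto intro: character_real simp: R_def)
  have "I \<in> A" unfolding I_def using f by (intro scale_mem diff_mem cnj_mem)
  then have I: "I \<in> A" "Im (\<phi> I) = 0" by (auto intro: character_real simp: I_def)
  have "f = (\<lambda>x. R x + \<i> * I x)" "(\<lambda>x. cnj (f x)) = (\<lambda>x. R x + (- \<i>) * I x)"
    by (auto simp: R_def I_def complex_eq_iff)
  moreover have "\<phi> (\<lambda>x. R x + c * I x) = \<phi> R + c * \<phi> I" for c
    using character_add[OF \<phi> R(1) scale_mem[OF I(1)]] character_scale[OF \<phi> I(1)] by simp
  ultimately have "\<phi> f = \<phi> R + \<i> * \<phi> I" "\<phi> (\<lambda>x. cnj (f x)) = \<phi> R + (- \<i>) * \<phi> I"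
    by metis+
  then show ?thesis using R(2) I(2) by (simp add: complex_eq_iff)
qed

lemma character_unit: "\<exists>u\<in>A. \<phi> u = 1"
proof -
  obtain f where "f \<in> A" "\<phi> f \<noteq> 0" using character_nonzero[OF \<phi>] by blast
  then show ?thesis
    using scale_mem character_scale[OF \<phi>, of f "inverse (\<phi> f)"] by (metis left_inverse)
qed

text \<open>The function \<open>q = \<Sum>\<^sub>f |f - \<phi> f u|\<^sup>2 + |u - 1|\<^sup>2 - 1\<close> lies in \<open>A\<close> and \<open>\<phi> q = -1\<close>;
  a point where \<open>q\<close> is close to \<open>-1\<close> makes all the squares small at once.\<close>
lemma character_approx_unit:
  assumes J: "finite J" "J \<subseteq> A" and u: "u \<in> A" "\<phi> u = 1" and "\<delta> > 0"
  shows "\<exists>x\<in>topspace X. norm (u x - 1) < \<delta> \<and> (\<forall>f\<in>J. norm (f x - \<phi> f * u x) < \<delta>)"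
proof -
  define p where "p f = (\<lambda>x. f x - \<phi> f * u x)" for f
  have pA: "p f \<in> A" if "f \<in> A" for f
    using that u unfolding p_def by (intro diff_mem scale_mem)
  have p0: "\<phi> (p f) = 0" if "f \<in> A" for f
    using character_diff[OF that scale_mem[OF u(1)]] character_scale[OF \<phi> u(1)] u(2)
    by (simp add: p_def)
  define q where "q x = (\<Sum>f\<in>J. p f x * cnj (p f x)) + (u x * cnj (u x) - u x - cnj (u x))" for x
  have q: "q \<in> A"
    unfolding q_def using J pA u by (intro add_mem sum_mem diff_mem mult_mem cnj_mem) auto
  have "\<phi> q = -1"
  proof -
    have "\<phi> (\<lambda>x. \<Sum>f\<in>J. p f x * cnj (p f x)) = (\<Sum>f\<in>J. \<phi> (p f) * \<phi> (\<lambda>x. cnj (p f x)))"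
      using J pA by (simp add: character_sum mult_mem cnj_mem character_mult[OF \<phi>] subset_iff)
    also have "\<dots> = 0" using J p0 by (simp add: subset_iff)
    finally show ?thesis
      using J pA u unfolding q_def
      by (simp add: character_add[OF \<phi>] character_diff character_mult[OF \<phi>] character_cnj
          add_mem diff_mem mult_mem cnj_mem sum_mem subset_iff)
  qed
  have q_sq: "q x + 1 = of_real ((\<Sum>f\<in>J. (norm (p f x))\<^sup>2) + (norm (u x - 1))\<^sup>2)" for x
  proof -
    have "of_real ((\<Sum>f\<in>J. (norm (p f x))\<^sup>2) + (norm (u x - 1))\<^sup>2)
        = (\<Sum>f\<in>J. p f x * cnj (p f x)) + (u x - 1) * cnj (u x - 1)"
      by (simp only: of_real_add of_real_sum complex_norm_square)
    then show ?thesis by (simp add: q_def algebra_simps)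
  qed
  have "\<exists>y\<in>q ` topspace X. dist y (\<phi> q) < \<delta>\<^sup>2"
    using character_in_closure_range[OF q] \<open>\<phi> q = -1\<close> \<open>\<delta> > 0\<close>
    unfolding closure_approachable by simp
  then obtain x where x: "x \<in> topspace X" "norm (q x + 1) < \<delta>\<^sup>2"
    using \<open>\<phi> q = -1\<close> by (auto simp: dist_norm)
  let ?S = "(\<Sum>f\<in>J. (norm (p f x))\<^sup>2) + (norm (u x - 1))\<^sup>2"
  have "?S < \<delta>\<^sup>2" using x(2) by (simp only: q_sq norm_of_real)
  moreover have "(norm (p f x))\<^sup>2 \<le> ?S" if "f \<in> J" for f
  proof -
    have "(norm (p f x))\<^sup>2 \<le> (\<Sum>f\<in>J. (norm (p f x))\<^sup>2)"
      using member_le_sum[OF that, of "\<lambda>f. (norm (p f x))\<^sup>2"] J(1) by simp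
    then show ?thesis using zero_le_power2[of "norm (u x - 1)"] by linarith
  qed
  moreover have "0 \<le> (\<Sum>f\<in>J. (norm (p f x))\<^sup>2)" by (simp add: sum_nonneg)
  ultimately have "(norm (u x - 1))\<^sup>2 < \<delta>\<^sup>2" "\<And>f. f \<in> J \<Longrightarrow> (norm (p f x))\<^sup>2 < \<delta>\<^sup>2"
    by (auto intro: le_less_trans)
  then have "norm (u x - 1) < \<delta>" "\<And>f. f \<in> J \<Longrightarrow> norm (p f x) < \<delta>"
    using \<open>\<delta> > 0\<close> by (auto intro: power2_less_imp_less)
  then show ?thesis by (intro bexI[OF _ x(1)]) (simp add: p_def)
qed

lemma character_approx:
  assumes J: "finite J" "J \<subseteq> A" and "\<epsilon> > 0"
  shows "\<exists>x\<in>topspace X. \<forall>f\<in>J. norm (f x - \<phi> f) < \<epsilon>"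
proof -
  obtain u where u: "u \<in> A" "\<phi> u = 1" using character_unit by blast
  define C where "C = (\<Sum>f\<in>J. norm (\<phi> f))"
  define \<delta> where "\<delta> = \<epsilon> / (C + 1)"
  have "C \<ge> 0" by (simp add: C_def sum_nonneg)
  then have "\<delta> > 0" using \<open>\<epsilon> > 0\<close> by (simp add: \<delta>_def)
  then obtain x where x: "x \<in> topspace X" "norm (u x - 1) < \<delta>"
    "\<And>f. f \<in> J \<Longrightarrow> norm (f x - \<phi> f * u x) < \<delta>"
    using character_approx_unit[OF J u] by blast
  have "norm (f x - \<phi> f) < \<epsilon>" if "f \<in> J" for f
  proof -
    have "norm (\<phi> f) \<le> C"
      using member_le_sum[OF that, of "\<lambda>f. norm (\<phi> f)"] J(1) by (simp add: C_def)
    have "norm (f x - \<phi> f) = norm ((f x - \<phi> f * u x) + \<phi> f * (u x - 1))"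
      by (simp add: algebra_simps)
    also have "\<dots> \<le> norm (f x - \<phi> f * u x) + norm (\<phi> f) * norm (u x - 1)"
      by (metis norm_mult norm_triangle_ineq)
    also have "\<dots> < \<delta> + C * \<delta>"
      using x that \<open>norm (\<phi> f) \<le> C\<close> \<open>C \<ge> 0\<close> by (intro add_less_le_mono mult_mono) auto
    also have "\<dots> = (C + 1) * \<delta>" by (simp add: algebra_simps)
    also have "\<dots> = \<epsilon>" using \<open>C \<ge> 0\<close> by (simp add: \<delta>_def)
    finally show ?thesis .
  qed
  then show ?thesis using x(1) by blast
qed

end

definition point_eval :: "'a \<Rightarrow> ('a \<Rightarrow> complex) \<Rightarrow> complex" where
  "point_eval x = (\<lambda>f\<in>A. f x)"

lemma point_eval_character:
  assumes "f \<in> A" "f x \<noteq> 0"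
  shows "point_eval x \<in> characters A"
  using assms unfolding characters_def point_eval_def
  by (auto intro!: bexI[of _ f] simp: add_mem scale_mem mult_mem)

lemma closure_of_point_eval:
  "spectrum_top A closure_of (point_eval ` topspace X) = topspace (spectrum_top A)"
proof (rule antisym[OF closure_of_subset_topspace subsetI])
  fix \<phi> assume "\<phi> \<in> topspace (spectrum_top A)"
  then have \<phi>: "\<phi> \<in> characters A" by (simp add: topspace_spectrum_top)
  obtain u where u: "u \<in> A" "\<phi> u = 1" using character_unit[OF \<phi>] by blast
  have "\<exists>x\<in>topspace X. point_eval x \<in> W" if "openin (spectrum_top A) W" "\<phi> \<in> W" for W
  proof -
    obtain T where T: "openin (product_topology (\<lambda>_. euclidean) A) T" "W = T \<inter> characters A"
      using \<open>openin (spectrum_top A) W\<close> unfolding spectrum_top_def openin_subtopology by blast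
    then obtain J \<epsilon> where J: "finite J" "J \<subseteq> A" "\<epsilon> > 0"
      and JT: "\<And>\<psi>. \<psi> \<in> extensional A \<Longrightarrow> (\<forall>f\<in>J. dist (\<psi> f) (\<phi> f) < \<epsilon>) \<Longrightarrow> \<psi> \<in> T"
      using product_topology_neighbourhood_ball \<open>\<phi> \<in> W\<close> by (metis IntD1)
    obtain x where x: "x \<in> topspace X" "\<forall>f\<in>insert u J. norm (f x - \<phi> f) < min \<epsilon> 1"
      using character_approx[OF \<phi>, of "insert u J" "min \<epsilon> 1"] J u by auto
    have "u x \<noteq> 0" using x(2) u(2) by auto
    then have "point_eval x \<in> characters A" by (rule point_eval_character[OF u(1)])
    moreover have "point_eval x \<in> T"
      using x(2) J(2) by (intro JT) (auto simp: point_eval_def dist_norm subset_iff)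
    ultimately show ?thesis using T(2) x(1) by blast
  qed
  then show "\<phi> \<in> spectrum_top A closure_of (point_eval ` topspace X)"
    using \<phi> by (auto simp: in_closure_of topspace_spectrum_top)
qed

lemma closedin_multiplicative_functionals:
  "closedin (product_topology (\<lambda>_. euclidean) A) (multiplicative_functionals A)"
proof -
  let ?P = "product_topology (\<lambda>_. euclidean) A :: (('a \<Rightarrow> complex) \<Rightarrow> complex) topology"
  have "multiplicative_functionals A =
      {\<psi> \<in> topspace ?P. \<forall>i\<in>A \<times> A. \<psi> (\<lambda>x. fst i x + snd i x) = \<psi> (fst i) + \<psi> (snd i)} \<inter>
      {\<psi> \<in> topspace ?P. \<forall>i\<in>A \<times> UNIV. \<psi> (\<lambda>x. snd i * fst i x) = snd i * \<psi> (fst i)} \<inter>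
      {\<psi> \<in> topspace ?P. \<forall>i\<in>A \<times> A. \<psi> (\<lambda>x. fst i x * snd i x) = \<psi> (fst i) * \<psi> (snd i)}"
    (is "_ = ?add \<inter> ?scale \<inter> ?mult")
    by (auto simp: multiplicative_functionals_def PiE_iff)
  moreover have "closedin ?P ?add"
  proof (rule closedin_Collect_all_eq)
    fix i assume "i \<in> A \<times> A"
    then show "continuous_map ?P euclidean (\<lambda>\<psi>. \<psi> (\<lambda>x. fst i x + snd i x))"
      by (intro continuous_map_product_euclidean_eval add_mem) auto
    show "continuous_map ?P euclidean (\<lambda>\<psi>. \<psi> (fst i) + \<psi> (snd i))"
      using \<open>i \<in> A \<times> A\<close> by (intro continuous_map_product_euclidean_eval continuous_map_add) auto
  qed simp
  moreover have "closedin ?P ?scale"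
  proof (rule closedin_Collect_all_eq)
    fix i assume "i \<in> A \<times> (UNIV :: complex set)"
    then show "continuous_map ?P euclidean (\<lambda>\<psi>. \<psi> (\<lambda>x. snd i * fst i x))"
      by (intro continuous_map_product_euclidean_eval scale_mem) auto
    show "continuous_map ?P euclidean (\<lambda>\<psi>. snd i * \<psi> (fst i))"
      using \<open>i \<in> A \<times> UNIV\<close> by (intro continuous_map_product_euclidean_eval continuous_map_times continuous_map_canonical_const) auto
  qed simp
  moreover have "closedin ?P ?mult"
  proof (rule closedin_Collect_all_eq)
    fix i assume "i \<in> A \<times> A"
    then show "continuous_map ?P euclidean (\<lambda>\<psi>. \<psi> (\<lambda>x. fst i x * snd i x))"
      by (intro continuous_map_product_euclidean_eval mult_mem) auto
    show "continuous_map ?P euclidean (\<lambda>\<psi>. \<psi> (fst i) * \<psi> (snd i))"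
      using \<open>i \<in> A \<times> A\<close> by (intro continuous_map_product_euclidean_eval continuous_map_times) auto
  qed simp
  ultimately show ?thesis by (simp add: closedin_Int)
qed

lemma compactin_spectrum_level_set:
  assumes a: "a \<in> A" and "c > 0"
  shows "compactin (spectrum_top A) {\<phi> \<in> characters A. c \<le> norm (\<phi> a)}"
proof -
  let ?P = "product_topology (\<lambda>_. euclidean) A :: (('a \<Rightarrow> complex) \<Rightarrow> complex) topology"
  define S where "S = {\<phi> \<in> characters A. c \<le> norm (\<phi> a)}"
  have "S = multiplicative_functionals A \<inter> {\<psi> \<in> topspace ?P. \<psi> a \<in> {z. c \<le> norm z}}"
    using a \<open>c > 0\<close>
    by (force simp: S_def characters_eq_multiplicative_functionals multiplicative_functionals_def PiE_iff)
  moreover have "closedin ?P {\<psi> \<in> topspace ?P. \<psi> a \<in> {z. c \<le> norm z}}"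
    by (rule closedin_continuous_map_preimage[OF continuous_map_product_euclidean_eval[OF a]])
       (simp add: closed_Collect_le continuous_on_norm_id)
  ultimately have "closedin ?P S"
    using closedin_multiplicative_functionals by (simp add: closedin_Int)
  define K where "K f = insert 0 (closure (f ` topspace X))" for f :: "'a \<Rightarrow> complex"
  have "S \<subseteq> PiE A K"
  proof
    fix \<phi> assume "\<phi> \<in> S"
    then have \<phi>: "\<phi> \<in> characters A" by (simp add: S_def)
    have "\<phi> f \<in> K f" if "f \<in> A" for f
      using character_in_closure_range[OF \<phi> that] by (auto simp: K_def)
    then show "\<phi> \<in> PiE A K" using character_extensional[OF \<phi>] by (simp add: PiE_iff)
  qed
  moreover have "compact (K f)" if f: "f \<in> A" for f
  proof -
    obtain M where "\<And>x. norm (f x) \<le> M" using Cb_bound[OF subsetD[OF subset_Cb f]] by blast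
    then have "bounded (f ` topspace X)" by (auto simp: bounded_iff)
    then show ?thesis by (simp add: K_def)
  qed
  then have "compactin ?P (PiE A K)" by (simp add: compactin_PiE)
  ultimately have "compactin ?P S"
    using closed_compactin \<open>closedin ?P S\<close> by blast
  then show ?thesis
    unfolding S_def spectrum_top_def compactin_subtopology by blast
qed

end

section \<open>The extension of the anchor map\<close>

lemma Cb_ideal_HX:
  assumes "continuous_map X B r"
  shows "Cb_ideal X (HX X B r)"
proof
  show "(\<lambda>x. 0) \<in> HX X B r"
    using HX_span_subset_HX[OF assms] HX_span.zero by blast
qed (use HX_subset_Cb HX_add HX_Cb_mult HX_cnj in auto)

locale LCH_B_space =
  fixes X :: "'a topology" and B :: "'b topology" and r :: "'a \<Rightarrow> 'b"
  assumes locally_compact: "locally_compact_space B" and Hausdorff: "Hausdorff_space B"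
    and continuous_anchor: "continuous_map X B r"
begin

sublocale Cb_ideal X "HX X B r"
  by (rule Cb_ideal_HX[OF continuous_anchor])

lemma anchor_in_topspace: "x \<in> topspace X \<Longrightarrow> r x \<in> topspace B"
  using continuous_anchor continuous_map_image_subset_topspace by blast

definition pullback :: "('b \<Rightarrow> complex) \<Rightarrow> 'a \<Rightarrow> complex" where
  "pullback h x = (if x \<in> topspace X then h (r x) else 0)"

lemma pullback_in_HX:
  assumes "h \<in> C0 B"
  shows "pullback h \<in> HX X B r"
proof -
  have "(\<lambda>x. (if x \<in> topspace X then 1 else 0) * h (r x)) \<in> HX_gen X B r"
    by (rule HX_genI[OF Cb_const_on assms])
  moreover have "(\<lambda>x. (if x \<in> topspace X then 1 else 0) * h (r x)) = pullback h"
    by (simp add: fun_eq_iff pullback_def)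
  ultimately show ?thesis
    using HX_gen_subset_HX[OF continuous_anchor] by auto
qed

lemma pullback_scale: "pullback (\<lambda>b. c * h b) = (\<lambda>x. c * pullback h x)"
  by (simp add: fun_eq_iff pullback_def)

lemma betaB_i_eq_point_eval: "betaB_i X B r = point_eval"
  by (simp add: fun_eq_iff betaB_i_def point_eval_def)

lemma point_eval_character_HX:
  assumes x: "x \<in> topspace X"
  shows "point_eval x \<in> characters (HX X B r)"
proof -
  obtain h where h: "h \<in> C0 B" "h (r x) = 1"
    using C0_Urysohn[OF locally_compact Hausdorff, of "{r x}" "topspace B"] anchor_in_topspace[OF x]
    by auto
  show ?thesis
    using h x by (intro point_eval_character[OF pullback_in_HX[OF h(1)]]) (simp add: pullback_def)
qed

context
  fixes \<phi> assumes \<phi>: "\<phi> \<in> characters (HX X B r)"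
begin

lemma character_span_nonzero: "\<exists>s\<in>HX_span X B r. \<phi> s \<noteq> 0"
proof -
  obtain f where f: "f \<in> HX X B r" "\<phi> f \<noteq> 0" using character_nonzero[OF \<phi>] by blast
  then obtain s where s: "s \<in> HX_span X B r" "\<forall>x\<in>topspace X. norm (f x - s x) \<le> norm (\<phi> f) / 2"
    using HX_approx[OF f(1), of "norm (\<phi> f) / 2"] by auto
  have sH: "s \<in> HX X B r" using s(1) HX_span_subset_HX[OF continuous_anchor] by blast
  have "norm (\<phi> (\<lambda>x. f x - s x)) \<le> norm (\<phi> f) / 2"
    using s(2) by (intro character_norm_le[OF \<phi> diff_mem[OF f(1) sH]]) auto
  then have "norm (\<phi> f - \<phi> s) \<le> norm (\<phi> f) / 2"
    by (simp only: character_diff[OF \<phi> f(1) sH])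
  then show ?thesis using f(2) s(1) by (intro bexI[of _ s]) auto
qed

lemma character_gen_nonzero: "\<exists>p\<in>HX_gen X B r. \<phi> p \<noteq> 0"
proof (rule ccontr)
  assume "\<not> ?thesis"
  then have gen: "\<And>p. p \<in> HX_gen X B r \<Longrightarrow> \<phi> p = 0" by blast
  have "\<phi> s = 0" if "s \<in> HX_span X B r" for s
    using that
  proof induction
    case (add s p c)
    have "s \<in> HX X B r" "p \<in> HX X B r"
      using add.hyps HX_span_subset_HX[OF continuous_anchor] HX_gen_subset_HX[OF continuous_anchor] by auto
    then show ?case
      using add.IH gen[OF add.hyps(2)] by (simp add: character_add[OF \<phi>] character_scale[OF \<phi>] scale_mem)
  qed (rule character_zero[OF \<phi>])
  then show False using character_span_nonzero by blast
qed

text \<open>A generator \<open>p = g \<cdot> (h \<circ> r)\<close> satisfies \<open>p\<^sup>2 = (g\<^sup>2 \<cdot> (h \<circ> r)) \<cdot> pullback h\<close>.\<close>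
lemma character_pullback_nonzero: "\<exists>h\<in>C0 B. \<phi> (pullback h) \<noteq> 0"
proof -
  obtain p where p_gen: "p \<in> HX_gen X B r" and "\<phi> p \<noteq> 0" using character_gen_nonzero by blast
  obtain g h where p: "p = (\<lambda>x. g x * h (r x))" and g: "g \<in> Cb X" and h: "h \<in> C0 B"
    using p_gen by (rule HX_genE)
  define q where "q x = (g x * g x) * h (r x)" for x
  have q: "q \<in> HX X B r"
    unfolding q_def using HX_genI[OF Cb_mult[OF g g] h] HX_gen_subset_HX[OF continuous_anchor] by blast
  have "p \<in> HX X B r"
    using p_gen HX_gen_subset_HX[OF continuous_anchor] by blast
  moreover have "(\<lambda>x. p x * p x) = (\<lambda>x. q x * pullback h x)"
    using CbD(2)[OF g] by (auto simp: fun_eq_iff p q_def pullback_def)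
  ultimately have "\<phi> p * \<phi> p = \<phi> q * \<phi> (pullback h)"
    using character_mult[OF \<phi> q pullback_in_HX[OF h]] character_mult[OF \<phi>, of p p] by simp
  then have "\<phi> (pullback h) \<noteq> 0" using \<open>\<phi> p \<noteq> 0\<close> by auto
  then show ?thesis using h by blast
qed

lemma character_pullback_unit: "\<exists>u\<in>C0 B. \<phi> (pullback u) = 1"
proof -
  obtain h where h: "h \<in> C0 B" "\<phi> (pullback h) \<noteq> 0" using character_pullback_nonzero by blast
  define u where "u = (\<lambda>b. inverse (\<phi> (pullback h)) * h b)"
  have "\<phi> (pullback u) = 1"
    using h character_scale[OF \<phi> pullback_in_HX[OF h(1)]] by (simp add: u_def pullback_scale)
  moreover have "u \<in> C0 B" unfolding u_def by (rule C0_scale[OF h(1)])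
  ultimately show ?thesis by blast
qed

lemma character_pullback_separating:
  assumes u: "u \<in> C0 B" "\<phi> (pullback u) = 1" "u b \<noteq> 0"
    and h: "h \<in> C0 B" "\<phi> (pullback h) \<noteq> h b"
  shows "\<exists>g\<in>C0 B. \<phi> (pullback g) = 0 \<and> g b = 1"
proof -
  define c where "c = \<phi> (pullback h)"
  define g0 where "g0 b' = u b' * (h b' - c)" for b'
  obtain M where M: "\<And>b. norm (h b) \<le> M" using C0_bound[OF h(1)] by blast
  have "g0 \<in> C0 B"
    unfolding g0_def
  proof (rule C0_mult_bounded[OF u(1)])
    show "continuous_map B euclidean (\<lambda>b. h b - c)"
      by (intro continuous_map_diff C0D(1)[OF h(1)] continuous_map_canonical_const)
    show "norm (h b - c) \<le> M + norm c" for b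
      using M[of b] norm_triangle_ineq4[of "h b" c] by linarith
  qed
  have "pullback g0 = (\<lambda>x. pullback u x * pullback h x - c * pullback u x)"
    by (simp add: fun_eq_iff pullback_def g0_def algebra_simps)
  then have "\<phi> (pullback g0) = 0"
    using u h pullback_in_HX
    by (simp add: character_diff[OF \<phi>] character_mult[OF \<phi>] character_scale[OF \<phi>] mult_mem scale_mem c_def)
  moreover have "g0 b \<noteq> 0" using u(3) h(2) by (simp add: g0_def c_def)
  ultimately have "\<phi> (pullback (\<lambda>b'. inverse (g0 b) * g0 b')) = 0"
    using character_scale[OF \<phi> pullback_in_HX[OF \<open>g0 \<in> C0 B\<close>]] by (simp add: pullback_scale)
  then show ?thesis
    using C0_scale[OF \<open>g0 \<in> C0 B\<close>] \<open>g0 b \<noteq> 0\<close> by (intro bexI[of _ "\<lambda>b'. inverse (g0 b) * g0 b'"]) auto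
qed

text \<open>Otherwise, choose \<open>u\<close> with \<open>\<phi> (pullback u) = 1\<close>; every point of the compact set
  \<open>K = {|u| \<ge> 1/2}\<close> has a neighbourhood \<open>{|g| > 1/2}\<close> with \<open>\<phi> (pullback g) = 0\<close>.  Approximating \<open>\<phi>\<close>
  at a point \<open>x\<close> on \<open>u\<close> and finitely many such \<open>g\<close> puts \<open>r x\<close> into \<open>K\<close> while all \<open>|g (r x)| < 1/2\<close>.\<close>
lemma character_pullback_point: "\<exists>b\<in>topspace B. \<forall>h\<in>C0 B. \<phi> (pullback h) = h b"
proof (rule ccontr)
  assume no_point: "\<not> ?thesis"
  obtain u where u: "u \<in> C0 B" "\<phi> (pullback u) = 1" using character_pullback_unit by blast
  define K where "K = {b \<in> topspace B. 1/2 \<le> norm (u b)}"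
  have K: "compactin B K" unfolding K_def using C0D(3)[OF u(1), of "1/2"] by simp
  have "\<forall>b\<in>K. \<exists>g\<in>C0 B. \<phi> (pullback g) = 0 \<and> g b = 1"
  proof
    fix b assume b: "b \<in> K"
    then have "u b \<noteq> 0" by (auto simp: K_def)
    moreover obtain h where "h \<in> C0 B" "\<phi> (pullback h) \<noteq> h b"
      using no_point b unfolding K_def by blast
    ultimately show "\<exists>g\<in>C0 B. \<phi> (pullback g) = 0 \<and> g b = 1"
      by (intro character_pullback_separating[OF u])
  qed
  then obtain G where G: "\<And>b. b \<in> K \<Longrightarrow> G b \<in> C0 B \<and> \<phi> (pullback (G b)) = 0 \<and> G b b = 1"
    using bchoice[of K "\<lambda>b g. g \<in> C0 B \<and> \<phi> (pullback g) = 0 \<and> g b = 1"] by blast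
  then have "\<And>b. b \<in> K \<Longrightarrow> continuous_map B euclidean (G b)" "\<And>b. b \<in> K \<Longrightarrow> 1/2 < norm (G b b)"
    using C0D(1) by auto
  then have "\<exists>F. finite F \<and> F \<subseteq> K \<and> (\<forall>b'\<in>K. \<exists>b\<in>F. 1/2 < norm (G b b'))"
    by (rule compactin_finite_cover_norm_gt[OF K])
  then obtain F where F: "finite F" "F \<subseteq> K" "\<forall>b'\<in>K. \<exists>b\<in>F. 1/2 < norm (G b b')"
    by blast
  define J where "J = insert (pullback u) ((\<lambda>b. pullback (G b)) ` F)"
  have "finite J" using F(1) by (simp add: J_def)
  moreover have "J \<subseteq> HX X B r" using F(2) G u(1) pullback_in_HX by (auto simp: J_def)
  ultimately obtain x where x: "x \<in> topspace X" "\<forall>f\<in>J. norm (f x - \<phi> f) < 1/2"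
    using character_approx[OF \<phi>, of J "1/2"] by auto
  have "norm (u (r x) - 1) < 1/2"
    using x u(2) by (simp add: J_def pullback_def)
  then have "r x \<in> K"
    using norm_triangle_ineq2[of 1 "u (r x)"] anchor_in_topspace[OF x(1)]
    by (simp add: K_def norm_minus_commute)
  then obtain b where "b \<in> F" "1/2 < norm (G b (r x))"
    using F(3) by blast
  moreover have "norm (G b (r x)) < 1/2"
  proof -
    have "norm (pullback (G b) x - \<phi> (pullback (G b))) < 1/2" using x(2) \<open>b \<in> F\<close> by (simp add: J_def)
    moreover have "\<phi> (pullback (G b)) = 0" using G \<open>b \<in> F\<close> F(2) by blast
    ultimately show ?thesis using x(1) by (simp add: pullback_def)
  qed
  ultimately show False by simp
qed

end

definition beta_anchor :: "(('a \<Rightarrow> complex) \<Rightarrow> complex) \<Rightarrow> 'b" where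
  "beta_anchor \<phi> = (SOME b. b \<in> topspace B \<and> (\<forall>h\<in>C0 B. \<phi> (pullback h) = h b))"

lemma beta_anchor:
  assumes "\<phi> \<in> characters (HX X B r)"
  shows "beta_anchor \<phi> \<in> topspace B" "\<And>h. h \<in> C0 B \<Longrightarrow> \<phi> (pullback h) = h (beta_anchor \<phi>)"
proof -
  have "beta_anchor \<phi> \<in> topspace B \<and> (\<forall>h\<in>C0 B. \<phi> (pullback h) = h (beta_anchor \<phi>))"
    unfolding beta_anchor_def by (rule someI_ex) (use character_pullback_point[OF assms] in blast)
  then show "beta_anchor \<phi> \<in> topspace B" "\<And>h. h \<in> C0 B \<Longrightarrow> \<phi> (pullback h) = h (beta_anchor \<phi>)"
    by auto
qed

lemma beta_anchor_point_eval:
  assumes x: "x \<in> topspace X"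
  shows "beta_anchor (point_eval x) = r x"
proof (rule C0_separates_points[OF locally_compact Hausdorff])
  show "beta_anchor (point_eval x) \<in> topspace B"
    by (rule beta_anchor(1)[OF point_eval_character_HX[OF x]])
  show "r x \<in> topspace B" by (rule anchor_in_topspace[OF x])
  fix h assume h: "h \<in> C0 B"
  show "h (beta_anchor (point_eval x)) = h (r x)"
    using beta_anchor(2)[OF point_eval_character_HX[OF x] h] pullback_in_HX[OF h] x
    by (simp add: point_eval_def pullback_def)
qed

lemma continuous_map_beta_anchor: "continuous_map (betaB X B r) B beta_anchor"
  unfolding continuous_map_def betaB_def topspace_spectrum_top
proof (intro conjI allI impI)
  show "beta_anchor \<in> characters (HX X B r) \<rightarrow> topspace B" using beta_anchor(1) by blast
  fix U assume U: "openin B U"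
  show "openin (spectrum_top (HX X B r)) {\<phi> \<in> characters (HX X B r). beta_anchor \<phi> \<in> U}"
  proof (subst openin_subopen, intro ballI)
    fix \<phi> assume "\<phi> \<in> {\<phi> \<in> characters (HX X B r). beta_anchor \<phi> \<in> U}"
    then have \<phi>: "\<phi> \<in> characters (HX X B r)" "beta_anchor \<phi> \<in> U" by auto
    obtain h where h: "h \<in> C0 B" "h (beta_anchor \<phi>) = 1" "\<And>b. b \<notin> U \<Longrightarrow> h b = 0"
      using C0_Urysohn[OF locally_compact Hausdorff, of "{beta_anchor \<phi>}" U] U \<phi> beta_anchor(1)[OF \<phi>(1)]
      by auto
    define T where "T = {\<psi> \<in> topspace (spectrum_top (HX X B r)). \<psi> (pullback h) \<in> ball 1 (1/2)}"
    have "openin (spectrum_top (HX X B r)) T" unfolding T_def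
      by (rule openin_continuous_map_preimage[OF continuous_map_spectrum_eval[OF pullback_in_HX[OF h(1)]]])
        simp
    moreover have "\<phi> \<in> T"
      using beta_anchor(2)[OF \<phi>(1) h(1)] h(2) \<phi>(1) by (simp add: T_def topspace_spectrum_top)
    moreover have "T \<subseteq> {\<phi> \<in> characters (HX X B r). beta_anchor \<phi> \<in> U}"
    proof
      fix \<psi> assume "\<psi> \<in> T"
      then have \<psi>: "\<psi> \<in> characters (HX X B r)" "\<psi> (pullback h) \<in> ball 1 (1/2)"
        by (auto simp: T_def topspace_spectrum_top)
      then have "h (beta_anchor \<psi>) \<noteq> 0" using beta_anchor(2)[OF \<psi>(1) h(1)] by auto
      then show "\<psi> \<in> {\<phi> \<in> characters (HX X B r). beta_anchor \<phi> \<in> U}" using h(3) \<psi>(1) by auto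
    qed
    ultimately show "\<exists>T. openin (spectrum_top (HX X B r)) T \<and> \<phi> \<in> T \<and>
        T \<subseteq> {\<phi> \<in> characters (HX X B r). beta_anchor \<phi> \<in> U}"
      by blast
  qed
qed

lemma proper_map_beta_anchor: "proper_map (betaB X B r) B beta_anchor"
proof (rule compact_imp_proper_map)
  show "k_space B" by (rule locally_compact_imp_k_space[OF locally_compact])
  show "kc_space B" by (rule Hausdorff_imp_kc_space[OF Hausdorff])
  show "beta_anchor \<in> topspace (betaB X B r) \<rightarrow> topspace B"
    using beta_anchor(1) by (auto simp: betaB_def topspace_spectrum_top)
  show "continuous_map (betaB X B r) B beta_anchor \<or> kc_space (betaB X B r)"
    using continuous_map_beta_anchor by blast
  fix K assume K: "compactin B K"
  obtain h where h: "h \<in> C0 B" "\<And>b. b \<in> K \<Longrightarrow> h b = 1"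
    using C0_Urysohn[OF locally_compact Hausdorff K openin_topspace compactin_subset_topspace[OF K]]
    by metis
  let ?L = "{\<phi> \<in> characters (HX X B r). 1/2 \<le> norm (\<phi> (pullback h))}"
  have "compactin (betaB X B r) ?L"
    unfolding betaB_def by (rule compactin_spectrum_level_set[OF pullback_in_HX[OF h(1)]]) simp
  moreover have "{\<phi> \<in> topspace (betaB X B r). beta_anchor \<phi> \<in> K} \<subseteq> ?L"
  proof
    fix \<phi> assume "\<phi> \<in> {\<phi> \<in> topspace (betaB X B r). beta_anchor \<phi> \<in> K}"
    then have \<phi>: "\<phi> \<in> characters (HX X B r)" "beta_anchor \<phi> \<in> K"
      by (auto simp: betaB_def topspace_spectrum_top)
    then show "\<phi> \<in> ?L" using beta_anchor(2)[OF \<phi>(1) h(1)] h(2) by simp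
  qed
  moreover have "closedin (betaB X B r) {\<phi> \<in> topspace (betaB X B r). beta_anchor \<phi> \<in> K}"
    using continuous_map_beta_anchor compactin_imp_closedin[OF Hausdorff K]
    by (rule closedin_continuous_map_preimage)
  ultimately show "compactin (betaB X B r) {\<phi> \<in> topspace (betaB X B r). beta_anchor \<phi> \<in> K}"
    by (rule closed_compactin)
qed

end

theorem corollary4p9:
  fixes X :: "'a topology" and B :: "'b topology" and r :: "'a \<Rightarrow> 'b"
  assumes "locally_compact_space B" and "Hausdorff_space B"
    and "continuous_map X B r"
  shows "(\<exists>F. continuous_map (betaB X B r) B F \<and> proper_map (betaB X B r) B F \<and>
              (\<forall>x\<in>topspace X. F (betaB_i X B r x) = r x))
       \<and> (\<forall>F G. continuous_map (betaB X B r) B F \<and> proper_map (betaB X B r) B F \<and>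
              (\<forall>x\<in>topspace X. F (betaB_i X B r x) = r x) \<and>
              continuous_map (betaB X B r) B G \<and> proper_map (betaB X B r) B G \<and>
              (\<forall>x\<in>topspace X. G (betaB_i X B r x) = r x)
              \<longrightarrow> (\<forall>p\<in>topspace (betaB X B r). F p = G p))"
proof -
  interpret LCH_B_space X B r by (rule LCH_B_space.intro[OF assms])
  have dense: "betaB X B r closure_of (betaB_i X B r ` topspace X) = topspace (betaB X B r)"
    unfolding betaB_def betaB_i_eq_point_eval by (rule closure_of_point_eval)
  have extends: "\<forall>x\<in>topspace X. beta_anchor (betaB_i X B r x) = r x"
    using beta_anchor_point_eval by (simp add: betaB_i_eq_point_eval)
  have unique: "F p = G p"
    if "continuous_map (betaB X B r) B F" "\<forall>x\<in>topspace X. F (betaB_i X B r x) = r x"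
      and "continuous_map (betaB X B r) B G" "\<forall>x\<in>topspace X. G (betaB_i X B r x) = r x"
      and "p \<in> topspace (betaB X B r)" for F G p
  proof (rule forall_in_closure_of_eq[OF _ Hausdorff that(1,3)])
    show "p \<in> betaB X B r closure_of (betaB_i X B r ` topspace X)" using dense that(5) by simp
  qed (use that(2,4) in auto)
  show ?thesis
    using continuous_map_beta_anchor proper_map_beta_anchor extends unique by blast
qed

end
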